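(* Let $z\in\mathcal F_\mathbb Z\setminus\{\Theta\}$, let $(q,r)$ be the lexicographically maximal FPF-visible inversion of $z$, and let $y=(q,r)z(q,r)$. Then $\hat\Psi^+(y,q)=\{z\}$.
   Context: Let $S_\mathbb Z$ be the group of finitely supported permutations of $\mathbb Z$. Let $\Theta(i)=i-(-1)^i$ and $\mathcal F_\mathbb Z=\{w^{-1}\Theta w:w\in S_\mathbb Z\}$. An FPF-visible inversion of $z$ is a pair $(i,j)\in\mathbb Z\times\mathbb Z$ with $i<j$ and $z(j)<\min\{i,z(i)\}$; every $z\ne\Theta$ has at least one, and there are finitely many. Let $\hat\ell_{\mathrm{FPF}}(z)=\frac12\#\{(i,j):i<j,\ z(i)>z(j),\ z(i)\ne j\}$. Define $\hat\Psi^+(y,q)=\{v\in\mathcal F_\mathbb Z:\hat\ell_{\mathrm{FPF}}(v)=\hat\ell_{\mathrm{FPF}}(y)+1,\ v=(q,j)y(q,j)\text{ for some integer }j>q\}$. *)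

theory Defs
  imports Complex_Main "HOL-Combinatorics.Transposition"
begin

definition SZ :: "(int \<Rightarrow> int) set" where
  "SZ = {w. bij w \<and> finite {i. w i \<noteq> i}}"

definition Theta :: "int \<Rightarrow> int" where
  "Theta i = i - (-1) ^ nat \<bar>i\<bar>"

definition FZ :: "(int \<Rightarrow> int) set" where
  "FZ = {inv w \<circ> Theta \<circ> w | w. w \<in> SZ}"

definition fpf_visible_inv :: "(int \<Rightarrow> int) \<Rightarrow> (int \<times> int) set" where
  "fpf_visible_inv z = {(i, j). i < j \<and> z j < min i (z i)}"

definition ellhat_fpf :: "(int \<Rightarrow> int) \<Rightarrow> rat" where
  "ellhat_fpf z = of_nat (card {(i, j). i < j \<and> z i > z j \<and> z i \<noteq> j}) / 2"

definition PsiHatPlus :: "(int \<Rightarrow> int) \<Rightarrow> int \<Rightarrow> (int \<Rightarrow> int) set" where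
  "PsiHatPlus y q = {v \<in> FZ. ellhat_fpf v = ellhat_fpf y + 1 \<and>
      (\<exists>j. j > q \<and> v = transpose q j \<circ> y \<circ> transpose q j)}"

end

theory Submission
  imports Defs
begin

text \<open>Every element of FZ is a fixed-point-free involution that agrees with Theta outside some
window [-2K+1, 2K], and on such a window ellhat is half of (number of inversions inside the window
minus 2K). Conjugating y by (q j) equals right multiplication of y (q j) by the transposition
(y q, y j), and a right multiplication by a transposition (a b) changes the inversion count by
+-(1 + 2m), where m counts the points strictly between a and b whose values lie strictly between the
values at a and b. So ellhat grows by exactly one iff both steps are ascents with m = 0; for
y = (q r) z (q r) the maximality of the visible inversion (q, r) gives this for j = r and rules it
out for every other j > q.\<close>

lemma Theta_eq: "Theta i = (if even i then i - 1 else i + 1)"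
proof -
  have "even (nat \<bar>i\<bar>) \<longleftrightarrow> even i"
    by (simp add: even_nat_iff)
  then show ?thesis
    unfolding Theta_def by (auto simp: neg_one_even_power neg_one_odd_power)
qed

lemma Theta_Theta [simp]: "Theta (Theta i) = i"
  by (simp add: Theta_eq)

lemma Theta_neq: "Theta i \<noteq> i"
  by (simp add: Theta_eq)

lemma Theta_inversion_imp_pair: "i < k \<Longrightarrow> Theta k < Theta i \<Longrightarrow> Theta i = k"
  by (auto simp: Theta_eq split: if_splits)

definition window :: "nat \<Rightarrow> int set" where
  "window K = {-2 * int K + 1..2 * int K}"

lemma finite_window [simp]: "finite (window K)"
  by (simp add: window_def)

lemma card_window: "card (window K) = 4 * K"
  by (simp add: window_def)

lemma window_between: "a \<in> window K \<Longrightarrow> b \<in> window K \<Longrightarrow> a < e \<Longrightarrow> e < b \<Longrightarrow> e \<in> window K"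
  by (simp add: window_def)

lemma Theta_notin_window: "i \<notin> window K \<Longrightarrow> Theta i \<notin> window K"
  by (auto simp: Theta_eq window_def split: if_splits; presburger)

lemma finite_subset_window:
  assumes "finite F"
  shows "\<exists>K. F \<subseteq> window K"
proof -
  define M where "M = Max (insert 0 (abs ` F))"
  have "x \<in> window (nat M + 1)" if "x \<in> F" for x
  proof -
    have "\<bar>x\<bar> \<le> M" "0 \<le> M"
      using assms that by (simp_all add: M_def)
    then have "int (nat M + 1) = M + 1" "- M \<le> x" "x \<le> M"
      by simp_all
    then show ?thesis
      unfolding window_def by simp
  qed
  then show ?thesis
    by blast
qed

definition window_fpf_involution :: "nat \<Rightarrow> (int \<Rightarrow> int) \<Rightarrow> bool" where
  "window_fpf_involution K w \<longleftrightarrow>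
     (\<forall>i. w (w i) = i) \<and> (\<forall>i. w i \<noteq> i) \<and> (\<forall>i. i \<notin> window K \<longrightarrow> w i = Theta i)"

lemma window_fpf_involution_mapsto:
  "window_fpf_involution K w \<Longrightarrow> i \<in> window K \<Longrightarrow> w i \<in> window K"
  unfolding window_fpf_involution_def by (metis Theta_notin_window)

lemma window_fpf_involution_conj_transpose:
  assumes "window_fpf_involution K w" "a \<in> window K" "b \<in> window K"
  shows "window_fpf_involution K (transpose a b \<circ> w \<circ> transpose a b)"
proof -
  have inv: "w (w i) = i" and fpf: "w i \<noteq> i" and outside: "i \<notin> window K \<Longrightarrow> w i = Theta i"
    for i using assms(1) by (simp_all add: window_fpf_involution_def)
  have "transpose a b (w (transpose a b i)) = Theta i" if "i \<notin> window K" for i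
  proof -
    have "Theta i \<notin> window K"
      using Theta_notin_window that by blast
    then have "transpose a b i = i" "transpose a b (Theta i) = Theta i"
      using assms(2,3) that by (metis transpose_apply_other)+
    then show ?thesis
      using outside that by simp
  qed
  moreover have "transpose a b (w (transpose a b i)) \<noteq> i" for i
    using fpf by (metis transpose_involutory)
  ultimately show ?thesis
    by (simp add: window_fpf_involution_def inv)
qed

lemma FZ_window_fpf_involution:
  assumes "z \<in> FZ" "finite F"
  shows "\<exists>K. F \<subseteq> window K \<and> window_fpf_involution K z"
proof -
  obtain w where "w \<in> SZ" and z: "z = inv w \<circ> Theta \<circ> w"
    using assms(1) unfolding FZ_def by blast
  then have w: "bij w" "finite {i. w i \<noteq> i}"
    by (simp_all add: SZ_def)
  define S where "S = {i. w i \<noteq> i}"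
  have inv_w: "inv w (w x) = x" "w (inv w x) = x" for x
    using w(1) by (simp_all add: bij_def surj_f_inv_f)
  have "finite (F \<union> S \<union> Theta ` S)"
    using w(2) assms(2) unfolding S_def by (intro finite_UnI finite_imageI)
  then obtain K where K: "F \<union> S \<union> Theta ` S \<subseteq> window K"
    by (metis finite_subset_window)
  have "z i = Theta i" if "i \<notin> window K" for i
  proof -
    have "i \<notin> S" "Theta i \<notin> S"
      using K that Theta_Theta by (blast, metis UnCI image_eqI subsetD)
    then have "w i = i" "w (Theta i) = Theta i"
      unfolding S_def by simp_all
    then show ?thesis
      using inv_w(1)[of "Theta i"] by (simp add: z)
  qed
  moreover have "z (z i) = i" for i
    by (simp add: z inv_w)
  moreover have "z i \<noteq> i" for i
  proof
    assume "z i = i"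
    then have "Theta (w i) = w i"
      using inv_w(2)[of "Theta (w i)"] by (simp add: z)
    then show False
      using Theta_neq by blast
  qed
  ultimately show ?thesis
    using K unfolding window_fpf_involution_def by blast
qed

definition inv_count :: "int set \<Rightarrow> (int \<Rightarrow> int) \<Rightarrow> int" where
  "inv_count A w = (\<Sum>i\<in>A. \<Sum>k\<in>A. if i < k \<and> w k < w i then 1 else 0)"

lemma int_card_pairs_eq_double_sum:
  assumes "finite A"
  shows "int (card {(i, k) \<in> A \<times> A. P i k}) = (\<Sum>i\<in>A. \<Sum>k\<in>A. if P i k then 1 else 0)"
proof -
  have "{(i, k) \<in> A \<times> A. P i k} = A \<times> A \<inter> {x. P (fst x) (snd x)}"
    by auto
  then have "int (card {(i, k) \<in> A \<times> A. P i k}) = (\<Sum>x\<in>A \<times> A. if P (fst x) (snd x) then 1 else 0)"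
    using assms by (simp add: sum.If_cases)
  also have "\<dots> = (\<Sum>i\<in>A. \<Sum>k\<in>A. if P i k then 1 else 0)"
    by (simp add: sum.cartesian_product case_prod_unfold)
  finally show ?thesis .
qed

lemma double_sum_remove_two:
  fixes D :: "int \<Rightarrow> int \<Rightarrow> int"
  assumes "finite A" "a \<in> A" "b \<in> A" "a \<noteq> b"
  shows "(\<Sum>i\<in>A. \<Sum>k\<in>A. D i k) = (\<Sum>i\<in>A - {a, b}. \<Sum>k\<in>A - {a, b}. D i k)
     + (\<Sum>e\<in>A - {a, b}. D e a + D e b + D a e + D b e) + D a a + D a b + D b a + D b b"
proof -
  define B where "B = A - {a, b}"
  have "A = insert a (insert b B)" "finite B" "a \<notin> B" "b \<notin> B"
    using assms by (auto simp: B_def)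
  then show ?thesis
    using assms(4) unfolding B_def[symmetric] by (simp add: sum.distrib algebra_simps)
qed

lemma inv_count_comp_transpose:
  assumes "finite A" "a \<in> A" "b \<in> A" "a < b" "inj_on w A" "w a < w b"
  shows "inv_count A (w \<circ> transpose a b) =
    inv_count A w + 1 + 2 * int (card {e \<in> A. a < e \<and> e < b \<and> w a < w e \<and> w e < w b})"
proof -
  define w' where "w' = w \<circ> transpose a b"
  define D where "D i k = (if i < k \<and> w' k < w' i then 1 else 0)
    - (if i < k \<and> w k < w i then 1 else (0::int))" for i k
  define P where "P e \<longleftrightarrow> a < e \<and> e < b \<and> w a < w e \<and> w e < w b" for e
  have "inv_count A w' - inv_count A w = (\<Sum>i\<in>A. \<Sum>k\<in>A. D i k)"
    by (simp add: inv_count_def D_def sum_subtractf)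
  also have "\<dots> = (\<Sum>i\<in>A - {a, b}. \<Sum>k\<in>A - {a, b}. D i k)
     + (\<Sum>e\<in>A - {a, b}. D e a + D e b + D a e + D b e) + D a a + D a b + D b a + D b b"
    using assms by (intro double_sum_remove_two) auto
  also have "(\<Sum>i\<in>A - {a, b}. \<Sum>k\<in>A - {a, b}. D i k) = 0"
    by (auto simp: D_def w'_def intro!: sum.neutral)
  also have "(\<Sum>e\<in>A - {a, b}. D e a + D e b + D a e + D b e) = (\<Sum>e\<in>A - {a, b}. if P e then 2 else 0)"
  proof (rule sum.cong)
    fix e assume e: "e \<in> A - {a, b}"
    then have "w e \<noteq> w a" "w e \<noteq> w b"
      using assms(2,3,5) by (auto dest: inj_onD)
    then show "D e a + D e b + D a e + D b e = (if P e then 2 else 0)"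
      using e assms(4,6) by (auto simp: D_def w'_def P_def)
  qed simp
  also have "\<dots> = 2 * int (card {e \<in> A. P e})"
  proof -
    have "{e \<in> A - {a, b}. P e} = {e \<in> A. P e}"
      by (auto simp: P_def)
    then show ?thesis
      using assms(1) by (simp add: sum.If_cases Int_def)
  qed
  finally have "inv_count A w' - inv_count A w = 2 * int (card {e \<in> A. P e}) + D a a + D a b + D b a + D b b"
    by simp
  moreover have "D a a = 0" "D a b = 1" "D b a = 0" "D b b = 0"
    using assms(4,6) by (simp_all add: D_def w'_def)
  ultimately show ?thesis
    unfolding w'_def P_def by linarith
qed

lemma inv_count_comp_transpose_less:
  assumes "finite A" "a \<in> A" "b \<in> A" "a < b" "inj_on w A" "w b < w a"
  shows "inv_count A (w \<circ> transpose a b) < inv_count A w"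
proof -
  have "inj_on (w \<circ> transpose a b) A"
    using assms(2,3,5) by (simp add: comp_inj_on)
  then have "inv_count A (w \<circ> transpose a b \<circ> transpose a b) > inv_count A (w \<circ> transpose a b)"
    using inv_count_comp_transpose[of A a b "w \<circ> transpose a b"] assms by simp
  then show ?thesis
    by (simp add: comp_assoc)
qed

lemma window_fpf_involution_inversion_in_window:
  assumes "window_fpf_involution K w" "i < j" "w j < w i" "w i \<noteq> j"
  shows "i \<in> window K \<and> j \<in> window K"
proof (rule ccontr)
  have outside: "\<And>i. i \<notin> window K \<Longrightarrow> w i = Theta i"
    using assms(1) by (simp add: window_fpf_involution_def)
  have mapsto: "\<And>i. i \<in> window K \<Longrightarrow> w i \<in> window K"
    using assms(1) by (rule window_fpf_involution_mapsto)
  assume "\<not> (i \<in> window K \<and> j \<in> window K)"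
  then consider "i \<notin> window K" "j \<notin> window K" | "i \<notin> window K" "j \<in> window K"
    | "i \<in> window K" "j \<notin> window K"
    by blast
  then show False
  proof cases
    case 1
    then show False
      using assms(2-4) outside Theta_inversion_imp_pair by metis
  next
    case 2
    then show False
      using assms(2,3) outside[of i] mapsto[of j] by (auto simp: window_def Theta_eq split: if_splits)
  next
    case 3
    then show False
      using assms(2,3) outside[of j] mapsto[of i] by (auto simp: window_def Theta_eq split: if_splits)
  qed
qed

lemma card_window_ascents:
  assumes "window_fpf_involution K w"
  shows "card {i \<in> window K. i < w i} = 2 * K"
proof -
  define A where "A = {i \<in> window K. i < w i}"
  define B where "B = {i \<in> window K. w i < i}"
  have inv: "\<And>i. w (w i) = i" and fpf: "\<And>i. w i \<noteq> i"
    using assms by (simp_all add: window_fpf_involution_def)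
  have mapsto: "\<And>i. i \<in> window K \<Longrightarrow> w i \<in> window K"
    using assms by (rule window_fpf_involution_mapsto)
  have "window K = A \<union> B"
    using fpf by (auto simp: A_def B_def neq_iff)
  moreover have "finite A" "finite B" "A \<inter> B = {}"
    by (auto simp: A_def B_def)
  ultimately have "card (window K) = card A + card B"
    by (simp add: card_Un_disjoint)
  moreover have "bij_betw w A B"
    by (rule bij_betw_byWitness[where f' = w]) (auto simp: A_def B_def inv mapsto)
  ultimately have "card (window K) = 2 * card A"
    by (simp add: bij_betw_same_card)
  then show ?thesis
    by (simp add: A_def card_window)
qed

lemma ellhat_fpf_window:
  assumes "window_fpf_involution K w"
  shows "ellhat_fpf w = (of_int (inv_count (window K) w) - of_nat (2 * K)) / 2"
proof -
  define W where "W = window K"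
  define C where "C = {(i, j). i < j \<and> w i > w j \<and> w i \<noteq> j}"
  define D where "D = {(i, j) \<in> W \<times> W. i < j \<and> w i = j}"
  define I where "I = {(i, j) \<in> W \<times> W. i < j \<and> w j < w i}"
  have inv: "\<And>i. w (w i) = i"
    using assms by (simp add: window_fpf_involution_def)
  have mapsto: "\<And>i. i \<in> W \<Longrightarrow> w i \<in> W"
    using assms W_def window_fpf_involution_mapsto by blast
  have "C \<subseteq> W \<times> W"
    using window_fpf_involution_inversion_in_window[OF assms] by (auto simp: C_def W_def)
  then have "I = C \<union> D" "C \<inter> D = {}"
    using inv by (auto simp: I_def C_def D_def)
  moreover have "finite I"
    by (rule finite_subset[of _ "W \<times> W"]) (auto simp: I_def W_def)
  ultimately have "card I = card C + card D"
    by (simp add: card_Un_disjoint)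
  moreover have "int (card I) = inv_count W w"
    unfolding I_def inv_count_def
    by (rule int_card_pairs_eq_double_sum) (simp add: W_def)
  moreover have "D = (\<lambda>i. (i, w i)) ` {i \<in> W. i < w i}"
    by (auto simp: D_def mapsto)
  then have "card D = 2 * K"
    by (simp add: card_image inj_on_def W_def card_window_ascents[OF assms])
  ultimately have "int (card C) = inv_count W w - int (2 * K)"
    by simp
  then show ?thesis
    unfolding ellhat_fpf_def C_def[symmetric] W_def[symmetric]
    by (metis of_int_diff of_int_of_nat_eq)
qed

lemma conj_transpose_eq_comp_transpose:
  assumes "\<And>i. y (y i) = i" "y a \<noteq> a" "y b \<noteq> b" "y a \<noteq> b"
  shows "transpose a b \<circ> y \<circ> transpose a b = y \<circ> transpose a b \<circ> transpose (y a) (y b)"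
proof -
  have "bij (y \<circ> transpose a b)"
    by (metis assms(1) bij_comp bij_transpose involuntory_imp_bij)
  moreover have "inv (y \<circ> transpose a b) = transpose a b \<circ> y"
    by (rule inv_unique_comp) (simp_all add: fun_eq_iff assms(1))
  moreover have "y b \<noteq> a"
    by (metis assms(1,4))
  ultimately show ?thesis
    using assms transpose_comp_eq[of "y \<circ> transpose a b" a b] by (simp add: comp_assoc)
qed

lemma inv_count_conj_transpose_eq_plus_two_iff:
  assumes "finite W" "q \<in> W" "j \<in> W" "q < j"
    and inv: "\<And>i. y (y i) = i" and fpf: "\<And>i. y i \<noteq> i" and mapsto: "\<And>i. i \<in> W \<Longrightarrow> y i \<in> W"
    and "y q \<noteq> j"
  shows "inv_count W (transpose q j \<circ> y \<circ> transpose q j) = inv_count W y + 2 \<longleftrightarrow>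
    y q < y j \<and> (\<forall>e\<in>W. \<not> (q < e \<and> e < j \<and> y q < y e \<and> y e < y j))
      \<and> (\<forall>e\<in>W. \<not> (y q < e \<and> e < y j \<and> q < y (transpose q j e) \<and> y (transpose q j e) < j))"
proof -
  define p u w1 where "p = y q" and "u = y j" and "w1 = y \<circ> transpose q j"
  have "p \<noteq> q" "p \<noteq> j" "u \<noteq> q" "u \<noteq> j" "p \<noteq> u"
    using fpf assms(4,8) inv unfolding p_def u_def by (metis less_irrefl)+
  then have w1_pu: "w1 p = q" "w1 u = j"
    by (simp_all add: w1_def p_def u_def inv)
  have pu_W: "p \<in> W" "u \<in> W"
    using assms(2,3) mapsto by (simp_all add: p_def u_def)
  have inj_y: "inj_on y W"
    by (metis inv inj_onI)
  have inj_w1: "inj_on w1 W"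
    using assms(2,3) by (metis w1_def comp_inj_on inj_onI inv transpose_image_eq inj_on_transpose)
  have v: "transpose q j \<circ> y \<circ> transpose q j = w1 \<circ> transpose p u"
    unfolding w1_def p_def u_def using assms(4,8) fpf inv by (intro conj_transpose_eq_comp_transpose) auto
  show ?thesis
  proof (cases "p < u")
    case True
    have "inv_count W w1 = inv_count W y + 1
        + 2 * int (card {e \<in> W. q < e \<and> e < j \<and> y q < y e \<and> y e < y j})"
      unfolding w1_def using assms(1-4) inj_y True p_def u_def by (intro inv_count_comp_transpose) auto
    moreover have "inv_count W (w1 \<circ> transpose p u) = inv_count W w1 + 1
        + 2 * int (card {e \<in> W. p < e \<and> e < u \<and> q < w1 e \<and> w1 e < j})"
      using inv_count_comp_transpose[OF assms(1) pu_W True inj_w1] assms(4) by (simp add: w1_pu)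
    moreover have "card {e \<in> W. P e} = 0 \<longleftrightarrow> (\<forall>e\<in>W. \<not> P e)" for P
      using assms(1) by auto
    ultimately show ?thesis
      using True by (simp add: v w1_def p_def u_def add_nonneg_eq_0_iff)
  next
    case False
    then have "u < p"
      using \<open>p \<noteq> u\<close> by simp
    then have "inv_count W w1 < inv_count W y"
      unfolding w1_def using assms(1-4) inj_y p_def u_def by (intro inv_count_comp_transpose_less) auto
    moreover have "inv_count W (w1 \<circ> transpose u p) < inv_count W w1"
      using inv_count_comp_transpose_less[OF assms(1) pu_W(2,1) \<open>u < p\<close> inj_w1] assms(4)
      by (simp add: w1_pu)
    moreover have "transpose p u = transpose u p"
      by (rule transpose_commute)
    ultimately show ?thesis
      using False by (simp add: v p_def u_def)
  qed
qed

definition cover_condition :: "(int \<Rightarrow> int) \<Rightarrow> int \<Rightarrow> int \<Rightarrow> bool" where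
  "cover_condition y q j \<longleftrightarrow> y q < y j
     \<and> (\<forall>e. q < e \<and> e < j \<longrightarrow> \<not> (y q < y e \<and> y e < y j))
     \<and> (\<forall>e. y q < e \<and> e < y j \<longrightarrow> \<not> (q < y (transpose q j e) \<and> y (transpose q j e) < j))"

lemma ellhat_fpf_conj_transpose_eq_plus_one_iff:
  assumes y: "window_fpf_involution K y" and "q \<in> window K" "j \<in> window K" "q < j" "y q \<noteq> j"
  shows "ellhat_fpf (transpose q j \<circ> y \<circ> transpose q j) = ellhat_fpf y + 1 \<longleftrightarrow> cover_condition y q j"
proof -
  let ?v = "transpose q j \<circ> y \<circ> transpose q j"
  have inv: "\<And>i. y (y i) = i" and fpf: "\<And>i. y i \<noteq> i"
    using y by (simp_all add: window_fpf_involution_def)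
  have mapsto: "\<And>i. i \<in> window K \<Longrightarrow> y i \<in> window K"
    using y by (rule window_fpf_involution_mapsto)
  have "window_fpf_involution K ?v"
    using assms(1-3) by (rule window_fpf_involution_conj_transpose)
  then have "ellhat_fpf ?v = ellhat_fpf y + 1 \<longleftrightarrow>
      (of_int (inv_count (window K) ?v) :: rat) = of_int (inv_count (window K) y + 2)"
    using y by (simp add: ellhat_fpf_window field_simps)
  also have "\<dots> \<longleftrightarrow> inv_count (window K) ?v = inv_count (window K) y + 2"
    by (rule of_int_eq_iff)
  also have "\<dots> \<longleftrightarrow> y q < y j \<and> (\<forall>e\<in>window K. \<not> (q < e \<and> e < j \<and> y q < y e \<and> y e < y j))
      \<and> (\<forall>e\<in>window K. \<not> (y q < e \<and> e < y j \<and> q < y (transpose q j e) \<and> y (transpose q j e) < j))"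
    using assms(2-5) inv fpf mapsto by (intro inv_count_conj_transpose_eq_plus_two_iff) auto
  also have "\<dots> \<longleftrightarrow> cover_condition y q j"
    using window_between[OF assms(2,3)] window_between[OF mapsto[OF assms(2)] mapsto[OF assms(3)]]
    unfolding cover_condition_def by blast
  finally show ?thesis .
qed

context
  fixes z y :: "int \<Rightarrow> int" and q r :: int
  assumes z_FZ: "z \<in> FZ"
    and visible: "(q, r) \<in> fpf_visible_inv z"
    and maximal: "\<forall>(i, j) \<in> fpf_visible_inv z. i < q \<or> (i = q \<and> j \<le> r)"
    and y_def: "y = transpose q r \<circ> z \<circ> transpose q r"
begin

lemma z_involution: "z (z i) = i" and z_fpf: "z i \<noteq> i"
  using FZ_window_fpf_involution[OF z_FZ, of "{}"] by (auto simp: window_fpf_involution_def)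

lemma q_less_r: "q < r" and z_r_less_q: "z r < q" and z_r_less_z_q: "z r < z q"
  using visible by (simp_all add: fpf_visible_inv_def)

lemma visible_lex_le_q_r:
  "a < b \<Longrightarrow> z b < a \<Longrightarrow> z b < z a \<Longrightarrow> a < q \<or> (a = q \<and> b \<le> r)"
  using maximal by (auto simp: fpf_visible_inv_def)

lemma y_q: "y q = z r"
  using z_r_less_q z_fpf[of r] by (simp add: y_def)

lemma z_q_neq_r: "z q \<noteq> r"
  using z_involution[of q] z_r_less_q by auto

lemma y_r: "y r = z q"
  using z_fpf[of q] z_q_neq_r by (simp add: y_def)

lemma y_other: "e \<noteq> q \<Longrightarrow> e \<noteq> r \<Longrightarrow> y e = transpose q r (z e)"
  by (simp add: y_def)

lemma y_eq_z: "e \<noteq> q \<Longrightarrow> e \<noteq> r \<Longrightarrow> e \<noteq> z q \<Longrightarrow> e \<noteq> z r \<Longrightarrow> y e = z e"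
  using z_involution by (metis y_other transpose_apply_other)

lemma cover_condition_r: "cover_condition y q r"
  unfolding cover_condition_def
proof (intro conjI allI impI notI)
  show "y q < y r"
    using z_r_less_z_q by (simp add: y_q y_r)
next
  fix e assume e: "q < e \<and> e < r" and between: "y q < y e \<and> y e < y r"
  consider "e = z q" | "e \<noteq> z q" "y e = z e"
    using e z_r_less_q y_eq_z by fastforce
  then show False
  proof cases
    case 1
    then show False
      using e between z_involution[of q] by (simp add: y_r y_other)
  next
    case 2
    then show False
      using visible_lex_le_q_r[of e r] e between z_r_less_q by (simp add: y_q y_r)
  qed
next
  fix e assume e: "y q < e \<and> e < y r" and between: "q < y (transpose q r e) \<and> y (transpose q r e) < r"
  have y_t: "y (transpose q r e) = transpose q r (z e)"
    by (simp add: y_def)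
  then have "z e \<noteq> q" "z e \<noteq> r"
    using between by auto
  then have "q < z e" "z e < r"
    using between y_t by simp_all
  then show False
    using visible_lex_le_q_r[of "z e" r] e z_involution[of e] z_r_less_q by (simp add: y_q y_r)
qed

lemma cover_condition_imp_neq_z_q:
  assumes "q < j" "cover_condition y q j"
  shows "j \<noteq> z q"
proof
  assume j: "j = z q"
  have "r < j"
  proof (rule ccontr)
    assume "\<not> r < j"
    then have "j < r"
      using j z_q_neq_r by simp
    then show False
      using visible_lex_le_q_r[of j r] assms(1) j z_involution[of q] z_r_less_q by simp
  qed
  moreover have "y j = r"
    using j z_fpf[of q] z_q_neq_r z_involution[of q] by (simp add: y_other)
  moreover have "\<forall>e. y q < e \<and> e < y j \<longrightarrow> \<not> (q < y (transpose q j e) \<and> y (transpose q j e) < j)"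
    using assms(2) unfolding cover_condition_def by blast
  ultimately show False
    using z_r_less_q q_less_r by (auto simp: y_q dest: spec[of _ q])
qed

lemma cover_condition_imp_ge_r:
  assumes "q < j" "cover_condition y q j"
  shows "r \<le> j"
proof (rule ccontr)
  assume "\<not> r \<le> j"
  moreover have "y j = z j"
    using assms cover_condition_imp_neq_z_q z_r_less_q calculation by (intro y_eq_z) auto
  ultimately show False
    using visible_lex_le_q_r[of j r] assms z_r_less_q unfolding cover_condition_def by (simp add: y_q)
qed

lemma cover_condition_imp_le_r:
  assumes "q < j" "cover_condition y q j"
  shows "j \<le> r"
proof (rule ccontr)
  assume "\<not> j \<le> r"
  then have "r < j" by simp
  have y_j: "y j = z j"
    using assms cover_condition_imp_neq_z_q z_r_less_q \<open>r < j\<close> q_less_r by (intro y_eq_z) auto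
  then have "z r < z j" "\<not> (z r < z q \<and> z q < z j)"
    using assms \<open>r < j\<close> q_less_r unfolding cover_condition_def by (auto simp: y_q y_r)
  moreover have "z j \<noteq> z q"
    using z_involution[of j] z_involution[of q] assms(1) by (metis less_irrefl)
  ultimately have "z j < z q"
    using z_r_less_z_q by auto
  have "q < z j"
  proof (rule ccontr)
    assume "\<not> q < z j"
    moreover have "z j \<noteq> q"
      using z_involution[of j] cover_condition_imp_neq_z_q[OF assms] by auto
    ultimately have "z j < q"
      by simp
    then show False
      using visible_lex_le_q_r[of q j] assms(1) \<open>z j < z q\<close> \<open>r < j\<close> by simp
  qed
  show False
  proof (cases "z j < j")
    case True
    then show False
      using assms \<open>q < z j\<close> z_r_less_q y_j unfolding cover_condition_def by (auto simp: y_q)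
  next
    case False
    then have "j < z q"
      using \<open>z j < z q\<close> z_fpf[of j] by simp
    then show False
      using visible_lex_le_q_r[of j "z q"] assms(1) False z_fpf[of j] z_involution[of q] by simp
  qed
qed

lemma ellhat_fpf_conj_transpose_eq_plus_one_iff_eq_r:
  assumes "q < j"
  shows "ellhat_fpf (transpose q j \<circ> y \<circ> transpose q j) = ellhat_fpf y + 1 \<longleftrightarrow> j = r"
proof -
  obtain K where K: "{q, r, j} \<subseteq> window K" "window_fpf_involution K z"
    using FZ_window_fpf_involution[OF z_FZ, of "{q, r, j}"] by auto
  then have "window_fpf_involution K y"
    unfolding y_def by (intro window_fpf_involution_conj_transpose) auto
  moreover have "y q \<noteq> j"
    using assms z_r_less_q by (simp add: y_q)
  ultimately have "ellhat_fpf (transpose q j \<circ> y \<circ> transpose q j) = ellhat_fpf y + 1 \<longleftrightarrow>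
      cover_condition y q j"
    using K(1) assms by (intro ellhat_fpf_conj_transpose_eq_plus_one_iff) auto
  then show ?thesis
    using cover_condition_r cover_condition_imp_ge_r cover_condition_imp_le_r assms by force
qed

end

theorem lemma3p17:
  fixes z :: "int \<Rightarrow> int" and q r :: int
  assumes "z \<in> FZ" and "z \<noteq> Theta"
    and "(q, r) \<in> fpf_visible_inv z"
    and "\<forall>(i, j) \<in> fpf_visible_inv z. i < q \<or> (i = q \<and> j \<le> r)"
  shows "PsiHatPlus (transpose q r \<circ> z \<circ> transpose q r) q = {z}"
proof -
  \<comment> \<open>The hypothesis z \<noteq> Theta only guarantees that a visible inversion exists.\<close>
  define y where "y = transpose q r \<circ> z \<circ> transpose q r"
  note ellhat_iff = ellhat_fpf_conj_transpose_eq_plus_one_iff_eq_r[OF assms(1,3,4) y_def]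
  have "transpose q r \<circ> y \<circ> transpose q r = z"
    by (simp add: y_def fun_eq_iff)
  moreover have "q < r"
    using assms(3) by (simp add: fpf_visible_inv_def)
  ultimately show ?thesis
    unfolding y_def[symmetric] PsiHatPlus_def using assms(1) ellhat_iff by auto
qed

end
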